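(* Let $A$ and $B$ be disjoint graphs, $a\in V(A)$ with $N(a,A)=\{a_1,a_2,a_3\}$, $b\in V(B)$ with $N(b,B)=\{b_1,b_2,b_3\}$, and $G=Aa\sigma bB$ where $\sigma(a_i)=b_i$ for each $i$. Let $P$ be a $\Lambda$-factor of $G$, and let $P'$ be the subgraph of $P$ consisting of those components (3-vertex paths) of $P$ that contain at least one of the edges $a_1b_1,a_2b_2,a_3b_3$. (a1) If $v(A)\equiv 0\pmod 3$ (so $v(B)\equiv 2 \pmod 3$), then one of the following holds: (a1.1) $P'$ has exactly one component, and it has exactly two vertices in $A-a$, these being adjacent, and exactly one vertex in $B-b$; (a1.2) $P'$ has exactly two components, each having exactly one vertex in $A-a$ and exactly two vertices in $B-b$, these being adjacent; (a1.3) $P'$ has exactly three components $L_1,L_2,L_3$, where (up to renaming) $L_1$ has exactly one vertex in $A-a$ and exactly two adjacent vertices in $B-b$, and each of $L_2,L_3$ has exactly two adjacent vertices in $A-a$ and exactly one vertex in $B-b$. (a2) If $v(A)\equiv 1\pmod 3$ (so $v(B)\equiv 1\pmod 3$), then one of the following holds: (a2.1) $P'=\emptyset$; (a2.2) $P'$ has exactly two components $L_1,L_2$, where (up to renaming) $L_1$ has exactly one vertex in $A-a$ and exactly two adjacent vertices in $B-b$, and $L_2$ has exactly two adjacent vertices in $A-a$ and exactly one vertex in $B-b$; (a2.3) $P'$ has exactly three components $L_1,L_2,L_3$, and either each $L_i$ has exactly one vertex in $A-a$ and exactly two adjacent vertices in $B-b$, or each $L_i$ has exactly two adjacent vertices in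 $A-a$ and exactly one vertex in $B-b$.
   Context: Graphs are finite, undirected, without loops or multiple edges; $v(G)=|V(G)|$; $N(x,G)$ is the set of neighbours of $x$. For disjoint graphs $A,B$, vertices $a\in V(A)$, $b\in V(B)$ and a bijection $\sigma: N(a,A)\to N(b,B)$, $Aa\sigma bB$ is $(A-a)\cup(B-b)$ together with the new edges $\{x\sigma(x): x\in N(a,A)\}$. A $\Lambda$-factor of $G$ is a spanning subgraph each of whose components is a path on 3 vertices. *)

theory Defs
  imports Main
begin

definition is_graph :: "'a set \<Rightarrow> 'a set set \<Rightarrow> bool" where
  "is_graph V E \<longleftrightarrow> finite V \<and> (\<forall>e\<in>E. \<exists>x y. e = {x, y} \<and> x \<noteq> y \<and> x \<in> V \<and> y \<in> V)"

definition nbhd :: "'a set set \<Rightarrow> 'a \<Rightarrow> 'a set" where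
  "nbhd E x = {y. {x, y} \<in> E}"

definition glue_V :: "'a set \<Rightarrow> 'a \<Rightarrow> 'a \<Rightarrow> 'a set \<Rightarrow> 'a set" where
  "glue_V VA a b VB = (VA - {a}) \<union> (VB - {b})"

definition glue_E :: "'a set set \<Rightarrow> 'a \<Rightarrow> ('a \<Rightarrow> 'a) \<Rightarrow> 'a \<Rightarrow> 'a set set \<Rightarrow> 'a set set" where
  "glue_E EA a \<sigma> b EB = {e \<in> EA. a \<notin> e} \<union> {e \<in> EB. b \<notin> e} \<union> {{x, \<sigma> x} | x. x \<in> nbhd EA a}"

definition comp :: "'a set set \<Rightarrow> 'a \<Rightarrow> 'a set" where
  "comp F v = {u. (v, u) \<in> {(x, y). {x, y} \<in> F}\<^sup>*}"

definition is_P3 :: "'a set \<Rightarrow> 'a set set \<Rightarrow> bool" where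
  "is_P3 C F' \<longleftrightarrow> (\<exists>x y z. x \<noteq> y \<and> y \<noteq> z \<and> x \<noteq> z \<and> C = {x, y, z} \<and> F' = {{x, y}, {y, z}})"

definition lambda_factor :: "'a set \<Rightarrow> 'a set set \<Rightarrow> 'a set set \<Rightarrow> bool" where
  "lambda_factor V E F \<longleftrightarrow> F \<subseteq> E \<and> (\<forall>v\<in>V. is_P3 (comp F v) {e \<in> F. e \<subseteq> comp F v})"

definition components :: "'a set \<Rightarrow> 'a set set \<Rightarrow> 'a set set" where
  "components V F = {comp F v | v. v \<in> V}"

definition sub_comps :: "'a set \<Rightarrow> 'a set set \<Rightarrow> 'a set set \<Rightarrow> 'a set set" where
  "sub_comps V F X = {C \<in> components V F. \<exists>e\<in>X. e \<in> F \<and> e \<subseteq> C}"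

definition two_one :: "'a set set \<Rightarrow> 'a set \<Rightarrow> 'a set \<Rightarrow> 'a set \<Rightarrow> bool" where
  "two_one F S T C \<longleftrightarrow> card (C \<inter> S) = 2 \<and> C \<inter> S \<in> F \<and> card (C \<inter> T) = 1"

end

theory Submission
  imports Defs
begin

text \<open>Every component of the factor is a path xyz. If it uses a cross edge, it has two
  adjacent vertices on one side and one on the other (the cross edges form a matching, so
  the second path edge is not a cross edge); otherwise it lies on one side. Hence
  |A - a| \<equiv> 2p + q (mod 3), where p and q count the components of P' with two vertices
  in A - a resp. in B - b. Each component of P' contains a different cross edge, so
  p + q \<le> 3, and the residue of v(A) leaves only the listed values of (p, q).\<close>

lemma comp_self: "v \<in> comp F v"
  unfolding comp_def by simp

lemma comp_eq_if_mem:
  assumes "u \<in> comp F v"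
  shows "comp F u = comp F v"
proof -
  let ?R = "{(x, y). {x, y} \<in> F}"
  have sym_R: "?R\<inverse> = ?R" by (auto simp: insert_commute)
  have vu: "(v, u) \<in> ?R\<^sup>*" using assms by (simp add: comp_def)
  then have "(u, v) \<in> (?R\<inverse>)\<^sup>*" by (rule rtrancl_converseI)
  then have uv: "(u, v) \<in> ?R\<^sup>*" using sym_R by simp
  show ?thesis unfolding comp_def using vu uv by (auto intro: rtrancl_trans)
qed

lemma components_disjoint:
  assumes "C1 \<in> components V F" "C2 \<in> components V F" "C1 \<noteq> C2"
  shows "C1 \<inter> C2 = {}"
proof -
  obtain v1 v2 where C: "C1 = comp F v1" "C2 = comp F v2"
    using assms(1,2) unfolding components_def by blast
  have "comp F v1 = comp F v2" if "x \<in> C1" "x \<in> C2" for x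
    using that C comp_eq_if_mem by metis
  then show ?thesis using assms(3) C by blast
qed

lemma components_eq_image: "components V F = comp F ` V"
  unfolding components_def by blast

lemma card_eq_sum_components:
  assumes "finite V" "S \<subseteq> V"
  shows "card S = (\<Sum>C\<in>components V F. card (C \<inter> S))"
proof -
  have S_eq: "S = (\<Union>C\<in>components V F. C \<inter> S)"
    using assms(2) comp_self[of _ F] unfolding components_eq_image by blast
  have "card (\<Union>C\<in>components V F. C \<inter> S) = (\<Sum>C\<in>components V F. card (C \<inter> S))"
  proof (rule card_UN_disjoint)
    show "finite (components V F)" using assms(1) by (simp add: components_eq_image)
    show "\<forall>C\<in>components V F. finite (C \<inter> S)" using assms finite_subset by blast
    show "\<forall>C1\<in>components V F. \<forall>C2\<in>components V F. C1 \<noteq> C2 \<longrightarrow> C1 \<inter> S \<inter> (C2 \<inter> S) = {}"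
      using components_disjoint[of _ V F] by blast
  qed
  with S_eq show ?thesis by simp
qed

lemma finite_sub_comps: "finite V \<Longrightarrow> finite (sub_comps V F X)"
  unfolding sub_comps_def by (simp add: components_eq_image)

lemma card_sub_comps_le:
  assumes "finite X" "{} \<notin> X"
  shows "card (sub_comps V F X) \<le> card X"
proof -
  let ?comp_of = "\<lambda>e. comp F (SOME v. v \<in> e)"
  have "sub_comps V F X \<subseteq> ?comp_of ` X"
  proof
    fix C assume "C \<in> sub_comps V F X"
    then obtain v e where C: "C = comp F v" and e: "e \<in> X" "e \<subseteq> C"
      unfolding sub_comps_def components_def by blast
    have "e \<noteq> {}" using e(1) assms(2) by blast
    then obtain u where "u \<in> e" by blast
    then have "(SOME v. v \<in> e) \<in> comp F v" using C e(2) by (metis someI subsetD)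
    then have "?comp_of e = C" using C comp_eq_if_mem by simp
    then show "C \<in> ?comp_of ` X" using e(1) by blast
  qed
  then have "card (sub_comps V F X) \<le> card (?comp_of ` X)"
    using assms(1) by (simp add: card_mono)
  also have "\<dots> \<le> card X" using assms(1) by (rule card_image_le)
  finally show ?thesis .
qed

lemma lambda_factor_component_P3:
  assumes "lambda_factor V E F" "C \<in> components V F"
  shows "is_P3 C {e \<in> F. e \<subseteq> C}"
  using assms unfolding lambda_factor_def components_def by blast

lemma two_one_card:
  "two_one F A B C \<Longrightarrow> card (C \<inter> A) = 2"
  "two_one F A B C \<Longrightarrow> card (C \<inter> B) = 1"
  unfolding two_one_def by simp_all

lemma two_one_exclusive: "\<not> (two_one F A B C \<and> two_one F B A C)"
  using two_one_card(1)[of F A B C] two_one_card(2)[of F B A C] by auto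

locale crossing_factor =
  fixes V A B :: "'a set" and E F X :: "'a set set"
  assumes factor: "lambda_factor V E F"
    and finite_V: "finite V"
    and sides: "V = A \<union> B" "A \<inter> B = {}"
    and edge_sides: "\<And>e. e \<in> E \<Longrightarrow> e \<subseteq> A \<or> e \<subseteq> B \<or> e \<in> X"
    and cross_edge: "\<And>e. e \<in> X \<Longrightarrow> \<exists>u w. e = {u, w} \<and> u \<in> A \<and> w \<in> B"
    and matching: "pairwise disjnt X"
begin

lemma factor_edge_sides: "e \<in> F \<Longrightarrow> e \<subseteq> A \<or> e \<subseteq> B \<or> e \<in> X"
  using factor edge_sides unfolding lambda_factor_def by blast

lemma path_through_cross_edge:
  assumes d: "x \<noteq> y" "y \<noteq> z" "x \<noteq> z" and xy: "{x, y} \<in> X" and yz: "{y, z} \<in> F"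
  shows "two_one F A B {x, y, z} \<or> two_one F B A {x, y, z}"
proof -
  have "{y, z} \<notin> X"
    using matching xy d unfolding pairwise_def disjnt_def by (metis doubleton_eq_iff insert_disjoint(2) insertI1)
  then have yz_side: "{y, z} \<subseteq> A \<or> {y, z} \<subseteq> B" using factor_edge_sides yz by blast
  obtain u w where uw: "{x, y} = {u, w}" "u \<in> A" "w \<in> B" using cross_edge xy by blast
  show ?thesis
  proof (cases "y \<in> A")
    case True
    then have "{x, y, z} \<inter> A = {y, z}" "{x, y, z} \<inter> B = {x}"
      using uw yz_side sides(2) by (auto simp: doubleton_eq_iff)
    then show ?thesis using yz d by (simp add: two_one_def)
  next
    case False
    then have "{x, y, z} \<inter> B = {y, z}" "{x, y, z} \<inter> A = {x}"
      using uw yz_side sides(2) by (auto simp: doubleton_eq_iff)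
    then show ?thesis using yz d by (simp add: two_one_def)
  qed
qed

lemma sub_comp_two_one:
  assumes "C \<in> sub_comps V F X"
  shows "two_one F A B C \<or> two_one F B A C"
proof -
  obtain e where C: "C \<in> components V F" and e: "e \<in> X" "e \<in> F" "e \<subseteq> C"
    using assms unfolding sub_comps_def by blast
  obtain x y z where d: "x \<noteq> y" "y \<noteq> z" "x \<noteq> z" and C_eq: "C = {x, y, z}"
    and edges: "{e \<in> F. e \<subseteq> C} = {{x, y}, {y, z}}"
    using lambda_factor_component_P3[OF factor C] unfolding is_P3_def by blast
  have xy: "{x, y} \<in> F" and yz: "{y, z} \<in> F" using edges by blast+
  have "e = {x, y} \<or> e = {y, z}" using e edges by blast
  then show ?thesis
  proof
    assume "e = {x, y}"
    then show ?thesis using path_through_cross_edge[OF d] e yz C_eq by simp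
  next
    assume "e = {y, z}"
    then have "two_one F A B {z, y, x} \<or> two_one F B A {z, y, x}"
      using path_through_cross_edge[of z y x] d e xy by (simp add: insert_commute)
    then show ?thesis using C_eq by (simp add: insert_commute)
  qed
qed

lemma three_dvd_card_other_comp:
  assumes "C \<in> components V F - sub_comps V F X"
  shows "3 dvd card (C \<inter> A)"
proof -
  obtain x y z where d: "x \<noteq> y" "y \<noteq> z" "x \<noteq> z" and C_eq: "C = {x, y, z}"
    and edges: "{e \<in> F. e \<subseteq> C} = {{x, y}, {y, z}}"
    using assms lambda_factor_component_P3[OF factor] unfolding is_P3_def by blast
  have xy: "{x, y} \<in> F" and yz: "{y, z} \<in> F" using edges by blast+
  have no_cross: "\<not> (\<exists>e\<in>X. e \<in> F \<and> e \<subseteq> C)" using assms unfolding sub_comps_def by blast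
  have "{x, y} \<subseteq> A \<or> {x, y} \<subseteq> B" using factor_edge_sides[OF xy] no_cross xy C_eq by blast
  moreover have "{y, z} \<subseteq> A \<or> {y, z} \<subseteq> B" using factor_edge_sides[OF yz] no_cross yz C_eq by blast
  ultimately have "C \<inter> A = C \<or> C \<inter> A = {}" using sides(2) C_eq by auto
  then show ?thesis
  proof
    assume "C \<inter> A = C"
    then have "card (C \<inter> A) = 3" using C_eq d by (simp add: eval_nat_numeral)
    then show ?thesis by simp
  qed simp
qed

lemma card_side_mod_3:
  "card A mod 3 =
    (2 * card {C \<in> sub_comps V F X. two_one F A B C} + card {C \<in> sub_comps V F X. two_one F B A C}) mod 3"
proof -
  let ?comps = "components V F" and ?P' = "sub_comps V F X" and ?c = "\<lambda>C. card (C \<inter> A)"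
  let ?P1 = "{C \<in> ?P'. two_one F A B C}" and ?P2 = "{C \<in> ?P'. two_one F B A C}"
  have fin: "finite ?comps" using finite_V by (simp add: components_eq_image)
  have P'_sub: "?P' \<subseteq> ?comps" unfolding sub_comps_def by blast
  have fin12: "finite ?P1" "finite ?P2" using finite_subset[OF P'_sub fin] by simp_all
  have P'_split: "?P' = ?P1 \<union> ?P2" by (auto dest: sub_comp_two_one)
  have P12_disj: "?P1 \<inter> ?P2 = {}" using two_one_exclusive by blast
  have "sum ?c ?P' = sum ?c (?P1 \<union> ?P2)" using P'_split by (rule arg_cong)
  also have "\<dots> = sum ?c ?P1 + sum ?c ?P2" by (rule sum.union_disjoint[OF fin12 P12_disj])
  also have "sum ?c ?P1 = (\<Sum>C\<in>?P1. 2)" by (rule sum.cong) (auto dest: two_one_card(1))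
  also have "sum ?c ?P2 = (\<Sum>C\<in>?P2. 1)" by (rule sum.cong) (auto dest: two_one_card(2))
  finally have P'_sum: "sum ?c ?P' = 2 * card ?P1 + card ?P2" by simp
  have "3 dvd sum ?c (?comps - ?P')" by (rule dvd_sum) (rule three_dvd_card_other_comp)
  then obtain k where rest: "sum ?c (?comps - ?P') = 3 * k" by blast
  have "card A = sum ?c ?comps"
    by (rule card_eq_sum_components[OF finite_V]) (use sides(1) in blast)
  also have "\<dots> = sum ?c (?comps - ?P') + sum ?c ?P'" by (rule sum.subset_diff[OF P'_sub fin])
  finally show ?thesis using rest P'_sum by simp
qed

end

lemma edge_subset_vertices:
  assumes "is_graph V E" "e \<in> E"
  shows "e \<subseteq> V"
  using assms unfolding is_graph_def by force

lemma nbhd_subset: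
  assumes "is_graph V E"
  shows "nbhd E a \<subseteq> V - {a}"
proof
  fix y assume "y \<in> nbhd E a"
  then have "{a, y} \<in> E" by (simp add: nbhd_def)
  then obtain u w where "{a, y} = {u, w}" "u \<noteq> w" "u \<in> V" "w \<in> V"
    using assms unfolding is_graph_def by blast
  then show "y \<in> V - {a}" by (auto simp: doubleton_eq_iff)
qed

lemma glue_E_edge_sides:
  assumes gA: "is_graph VA EA" and gB: "is_graph VB EB" and e: "e \<in> glue_E EA a \<sigma> b EB"
  shows "e \<subseteq> VA - {a} \<or> e \<subseteq> VB - {b} \<or> e \<in> (\<lambda>x. {x, \<sigma> x}) ` nbhd EA a"
proof -
  consider "e \<in> EA" "a \<notin> e" | "e \<in> EB" "b \<notin> e" | "e \<in> (\<lambda>x. {x, \<sigma> x}) ` nbhd EA a"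
    using e unfolding glue_E_def by blast
  then show ?thesis
    by cases (use edge_subset_vertices[OF gA] edge_subset_vertices[OF gB] in blast)+
qed

lemma cross_edges_matching:
  assumes "N \<subseteq> A" "\<sigma> ` N \<subseteq> B" "A \<inter> B = {}" "inj_on \<sigma> N"
  shows "pairwise disjnt ((\<lambda>x. {x, \<sigma> x}) ` N)"
proof (rule pairwise_imageI)
  fix x y assume "x \<in> N" "y \<in> N" "x \<noteq> y"
  then show "disjnt {x, \<sigma> x} {y, \<sigma> y}"
    using assms unfolding disjnt_def inj_on_def by blast
qed

lemma crossing_factor_glue:
  assumes gA: "is_graph VA EA" and gB: "is_graph VB EB" and disj: "VA \<inter> VB = {}"
    and into: "\<sigma> ` nbhd EA a \<subseteq> nbhd EB b" and inj: "inj_on \<sigma> (nbhd EA a)"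
    and P: "lambda_factor (glue_V VA a b VB) (glue_E EA a \<sigma> b EB) F"
  shows "crossing_factor (glue_V VA a b VB) (VA - {a}) (VB - {b}) (glue_E EA a \<sigma> b EB) F
    ((\<lambda>x. {x, \<sigma> x}) ` nbhd EA a)"
proof
  have N_A: "nbhd EA a \<subseteq> VA - {a}" by (rule nbhd_subset[OF gA])
  have N_B: "\<sigma> ` nbhd EA a \<subseteq> VB - {b}" using into nbhd_subset[OF gB] by blast
  show "lambda_factor (glue_V VA a b VB) (glue_E EA a \<sigma> b EB) F" by (fact P)
  show "finite (glue_V VA a b VB)" using gA gB by (simp add: glue_V_def is_graph_def)
  show "glue_V VA a b VB = (VA - {a}) \<union> (VB - {b})" by (simp add: glue_V_def)
  show "(VA - {a}) \<inter> (VB - {b}) = {}" using disj by blast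
  show "e \<subseteq> VA - {a} \<or> e \<subseteq> VB - {b} \<or> e \<in> (\<lambda>x. {x, \<sigma> x}) ` nbhd EA a"
    if "e \<in> glue_E EA a \<sigma> b EB" for e
    by (rule glue_E_edge_sides[OF gA gB that])
  show "\<exists>u w. e = {u, w} \<and> u \<in> VA - {a} \<and> w \<in> VB - {b}" if "e \<in> (\<lambda>x. {x, \<sigma> x}) ` nbhd EA a" for e
    using that N_A N_B by blast
  show "pairwise disjnt ((\<lambda>x. {x, \<sigma> x}) ` nbhd EA a)"
    using cross_edges_matching[OF N_A N_B _ inj] disj by blast
qed

lemma mod_3_eq_0_cases:
  fixes p q :: nat
  assumes "p + q \<le> 3" "(2 * p + q + 1) mod 3 = 0"
  shows "(p, q) \<in> {(1, 0), (0, 2), (2, 1)}"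
proof -
  have "p \<in> {0, 1, 2, 3}" "q \<in> {0, 1, 2, 3}" using assms(1) by auto
  then show ?thesis using assms by (elim insertE emptyE) simp_all
qed

lemma mod_3_eq_1_cases:
  fixes p q :: nat
  assumes "p + q \<le> 3" "(2 * p + q + 1) mod 3 = 1"
  shows "(p, q) \<in> {(0, 0), (1, 1), (3, 0), (0, 3)}"
proof -
  have "p \<in> {0, 1, 2, 3}" "q \<in> {0, 1, 2, 3}" using assms(1) by auto
  then show ?thesis using assms by (elim insertE emptyE) simp_all
qed

lemma two_classes_split:
  fixes P :: "'c set" and \<alpha> \<beta> :: "'c \<Rightarrow> bool"
  assumes "finite P" "\<And>L. L \<in> P \<Longrightarrow> \<alpha> L \<noteq> \<beta> L"
  shows "P = {L \<in> P. \<alpha> L} \<union> {L \<in> P. \<beta> L}" "{L \<in> P. \<alpha> L} \<inter> {L \<in> P. \<beta> L} = {}"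
    "card P = card {L \<in> P. \<alpha> L} + card {L \<in> P. \<beta> L}"
proof -
  show split: "P = {L \<in> P. \<alpha> L} \<union> {L \<in> P. \<beta> L}" and disj: "{L \<in> P. \<alpha> L} \<inter> {L \<in> P. \<beta> L} = {}"
    using assms(2) by auto
  have "card ({L \<in> P. \<alpha> L} \<union> {L \<in> P. \<beta> L}) = card {L \<in> P. \<alpha> L} + card {L \<in> P. \<beta> L}"
    using assms(1) disj by (intro card_Un_disjoint) simp_all
  then show "card P = card {L \<in> P. \<alpha> L} + card {L \<in> P. \<beta> L}" using split by simp
qed

lemma two_class_shapes_mod_3_eq_0:
  fixes P :: "'c set" and \<alpha> \<beta> :: "'c \<Rightarrow> bool"
  assumes fin: "finite P" and le: "card P \<le> 3" and classes: "\<And>L. L \<in> P \<Longrightarrow> \<alpha> L \<noteq> \<beta> L"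
    and res: "(2 * card {L \<in> P. \<alpha> L} + card {L \<in> P. \<beta> L} + 1) mod 3 = 0"
  shows "(card P = 1 \<and> (\<forall>L\<in>P. \<alpha> L)) \<or> (card P = 2 \<and> (\<forall>L\<in>P. \<beta> L))
    \<or> (\<exists>L1 L2 L3. P = {L1, L2, L3} \<and> L1 \<noteq> L2 \<and> L1 \<noteq> L3 \<and> L2 \<noteq> L3 \<and> \<beta> L1 \<and> \<alpha> L2 \<and> \<alpha> L3)"
proof -
  let ?P1 = "{L \<in> P. \<alpha> L}" and ?P2 = "{L \<in> P. \<beta> L}"
  note split = two_classes_split[of P \<alpha> \<beta>, OF fin classes]
  have fin12: "finite ?P1" "finite ?P2" using fin by simp_all
  have "(card ?P1, card ?P2) \<in> {(1, 0), (0, 2), (2, 1)}"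
    using mod_3_eq_0_cases le res split(3) by simp
  then consider "card ?P1 = 1" "?P2 = {}" | "?P1 = {}" "card ?P2 = 2" | "card ?P1 = 2" "card ?P2 = 1"
    using fin12 by fastforce
  then show ?thesis
  proof cases
    case 1
    have "card P = 1" using split(3) by (simp add: 1)
    moreover have "\<forall>L\<in>P. \<alpha> L" using 1(2) classes by blast
    ultimately show ?thesis by blast
  next
    case 2
    have "card P = 2" using split(3) by (simp add: 2)
    moreover have "\<forall>L\<in>P. \<beta> L" using 2(1) classes by blast
    ultimately show ?thesis by blast
  next
    case 3
    obtain L1 where P2: "?P2 = {L1}" using 3(2) by (rule card_1_singletonE)
    obtain L2 L3 where P1: "?P1 = {L2, L3}" and "L2 \<noteq> L3" using 3(1) by (meson card_2_iff)
    from split(1) have "P = {L1, L2, L3}" unfolding P1 P2 by auto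
    moreover have "\<beta> L1" "\<alpha> L2" "\<alpha> L3" using P1 P2 by blast+
    moreover have "L1 \<noteq> L2" "L1 \<noteq> L3" using split(2) unfolding P1 P2 by auto
    ultimately show ?thesis using \<open>L2 \<noteq> L3\<close> by blast
  qed
qed

lemma two_class_shapes_mod_3_eq_1:
  fixes P :: "'c set" and \<alpha> \<beta> :: "'c \<Rightarrow> bool"
  assumes fin: "finite P" and le: "card P \<le> 3" and classes: "\<And>L. L \<in> P \<Longrightarrow> \<alpha> L \<noteq> \<beta> L"
    and res: "(2 * card {L \<in> P. \<alpha> L} + card {L \<in> P. \<beta> L} + 1) mod 3 = 1"
  shows "P = {} \<or> (\<exists>L1 L2. P = {L1, L2} \<and> L1 \<noteq> L2 \<and> \<beta> L1 \<and> \<alpha> L2)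
    \<or> (\<exists>L1 L2 L3. P = {L1, L2, L3} \<and> L1 \<noteq> L2 \<and> L1 \<noteq> L3 \<and> L2 \<noteq> L3 \<and>
         ((\<beta> L1 \<and> \<beta> L2 \<and> \<beta> L3) \<or> (\<alpha> L1 \<and> \<alpha> L2 \<and> \<alpha> L3)))"
proof -
  let ?P1 = "{L \<in> P. \<alpha> L}" and ?P2 = "{L \<in> P. \<beta> L}"
  note split = two_classes_split[of P \<alpha> \<beta>, OF fin classes]
  have fin12: "finite ?P1" "finite ?P2" using fin by simp_all
  have "(card ?P1, card ?P2) \<in> {(0, 0), (1, 1), (3, 0), (0, 3)}"
    using mod_3_eq_1_cases le res split(3) by simp
  then consider "?P1 = {}" "?P2 = {}" | "card ?P1 = 1" "card ?P2 = 1"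
    | "card ?P1 = 3" "?P2 = {}" | "?P1 = {}" "card ?P2 = 3"
    using fin12 by fastforce
  then show ?thesis
  proof cases
    case 1
    then have "P = {}" using classes by blast
    then show ?thesis by simp
  next
    case 2
    obtain L1 where P2: "?P2 = {L1}" using 2(2) by (rule card_1_singletonE)
    obtain L2 where P1: "?P1 = {L2}" using 2(1) by (rule card_1_singletonE)
    from split(1) have "P = {L1, L2}" unfolding P1 P2 by auto
    moreover have "\<beta> L1" "\<alpha> L2" using P1 P2 by blast+
    moreover have "L1 \<noteq> L2" using split(2) unfolding P1 P2 by auto
    ultimately show ?thesis by blast
  next
    case 3
    obtain L1 L2 L3 where P1: "?P1 = {L1, L2, L3}" and d: "L1 \<noteq> L2" "L1 \<noteq> L3" "L2 \<noteq> L3"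
      using 3(1) by (meson card_3_iff)
    from split(1) have "P = {L1, L2, L3}" unfolding P1 3(2) by simp
    moreover have "\<alpha> L1" "\<alpha> L2" "\<alpha> L3" using P1 by blast+
    ultimately show ?thesis using d by blast
  next
    case 4
    obtain L1 L2 L3 where P2: "?P2 = {L1, L2, L3}" and d: "L1 \<noteq> L2" "L1 \<noteq> L3" "L2 \<noteq> L3"
      using 4(2) by (meson card_3_iff)
    from split(1) have "P = {L1, L2, L3}" unfolding P2 4(1) by simp
    moreover have "\<beta> L1" "\<beta> L2" "\<beta> L3" using P2 by blast+
    ultimately show ?thesis using d by blast
  qed
qed

theorem mainTheorem6:
  fixes VA VB :: "'a set" and EA EB F :: "'a set set"
    and a a1 a2 a3 b b1 b2 b3 :: 'a and \<sigma> :: "'a \<Rightarrow> 'a"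
  assumes gA: "is_graph VA EA" and gB: "is_graph VB EB"
    and disj: "VA \<inter> VB = {}"
    and aA: "a \<in> VA" and bB: "b \<in> VB"
    and Na: "nbhd EA a = {a1, a2, a3}" and adist: "a1 \<noteq> a2" "a1 \<noteq> a3" "a2 \<noteq> a3"
    and Nb: "nbhd EB b = {b1, b2, b3}" and bdist: "b1 \<noteq> b2" "b1 \<noteq> b3" "b2 \<noteq> b3"
    and sig: "\<sigma> a1 = b1" "\<sigma> a2 = b2" "\<sigma> a3 = b3"
    and P: "lambda_factor (glue_V VA a b VB) (glue_E EA a \<sigma> b EB) F"
  defines "A' \<equiv> VA - {a}" and "B' \<equiv> VB - {b}"
    and "P' \<equiv> sub_comps (glue_V VA a b VB) F {{a1, b1}, {a2, b2}, {a3, b3}}"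
  shows
    "(card VA mod 3 = 0 \<longrightarrow>
        (card P' = 1 \<and> (\<forall>L\<in>P'. two_one F A' B' L))
      \<or> (card P' = 2 \<and> (\<forall>L\<in>P'. two_one F B' A' L))
      \<or> (\<exists>L1 L2 L3. P' = {L1, L2, L3} \<and> L1 \<noteq> L2 \<and> L1 \<noteq> L3 \<and> L2 \<noteq> L3 \<and>
           two_one F B' A' L1 \<and> two_one F A' B' L2 \<and> two_one F A' B' L3))
   \<and> (card VA mod 3 = 1 \<longrightarrow>
        P' = {}
      \<or> (\<exists>L1 L2. P' = {L1, L2} \<and> L1 \<noteq> L2 \<and> two_one F B' A' L1 \<and> two_one F A' B' L2)
      \<or> (\<exists>L1 L2 L3. P' = {L1, L2, L3} \<and> L1 \<noteq> L2 \<and> L1 \<noteq> L3 \<and> L2 \<noteq> L3 \<and>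
           ((two_one F B' A' L1 \<and> two_one F B' A' L2 \<and> two_one F B' A' L3) \<or>
            (two_one F A' B' L1 \<and> two_one F A' B' L2 \<and> two_one F A' B' L3))))"
proof -
  let ?X = "{{a1, b1}, {a2, b2}, {a3, b3}}"
  have "\<sigma> ` nbhd EA a \<subseteq> nbhd EB b" by (simp add: Na Nb sig)
  moreover have "inj_on \<sigma> (nbhd EA a)" using adist bdist by (simp add: Na sig)
  moreover have "(\<lambda>x. {x, \<sigma> x}) ` nbhd EA a = ?X" by (simp add: Na sig)
  ultimately interpret crossing_factor "glue_V VA a b VB" A' B' "glue_E EA a \<sigma> b EB" F ?X
    using crossing_factor_glue[OF gA gB disj _ _ P] unfolding A'_def B'_def by metis
  have fin: "finite P'" unfolding P'_def by (rule finite_sub_comps[OF finite_V])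
  have "card P' \<le> card ?X" unfolding P'_def by (rule card_sub_comps_le) auto
  also have "card ?X \<le> 3" by (intro card_insert_le_m1) simp_all
  finally have le: "card P' \<le> 3" .
  have classes: "two_one F A' B' L \<noteq> two_one F B' A' L" if "L \<in> P'" for L
    using that sub_comp_two_one two_one_exclusive unfolding P'_def by blast
  have "finite VA" using gA by (simp add: is_graph_def)
  then have "card VA = card A' + 1" using card_Suc_Diff1[OF _ aA] by (simp add: A'_def)
  then have "card VA mod 3 = (card A' mod 3 + 1) mod 3" by (simp add: mod_Suc_eq)
  also have "\<dots> = (2 * card {L \<in> P'. two_one F A' B' L} + card {L \<in> P'. two_one F B' A' L} + 1) mod 3"
    unfolding card_side_mod_3[folded P'_def] by (rule mod_add_left_eq)
  finally have res: "card VA mod 3 = \<dots>" .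
  note shapes_0 = two_class_shapes_mod_3_eq_0[of P' "two_one F A' B'" "two_one F B' A'", OF fin le classes]
   and shapes_1 = two_class_shapes_mod_3_eq_1[of P' "two_one F A' B'" "two_one F B' A'", OF fin le classes]
  show ?thesis
    unfolding res by (intro conjI impI shapes_0 shapes_1)
qed

end
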